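(* Let $0<\lambda<\frac{5-\sqrt{21}}{2}$ and let $K$ be the attractor of the IFS $f_1(x)=\lambda x$, $f_2(x)=\lambda x+2\lambda$, $f_3(x)=\lambda x+3\lambda-\lambda^2$, $f_4(x)=\lambda x+1-\lambda$. If $x\in K$ has infinitely many codings, then $x$ has uncountably many codings; in particular $U_{\aleph_0}=\emptyset$.
   Context: A coding of $x\in K$ is a sequence $(i_n)\in\{1,2,3,4\}^{\mathbb{N}}$ with $x=\lim_{n\to\infty}f_{i_1}\circ\cdots\circ f_{i_n}(0)$. $U_{\aleph_0}$ denotes the set of $x\in K$ having exactly countably infinitely many codings. *)

theory Defs
  imports Complex_Main "HOL-Library.Countable_Set"
begin

text \<open>The IFS maps f_1,...,f_4 (indices 1..4; other indices are irrelevant).\<close>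
definition ifs :: "real \<Rightarrow> nat \<Rightarrow> real \<Rightarrow> real" where
  "ifs lam i x =
     (if i = 1 then lam * x
      else if i = 2 then lam * x + 2 * lam
      else if i = 3 then lam * x + 3 * lam - lam\<^sup>2
      else lam * x + 1 - lam)"

definition partial_comp :: "real \<Rightarrow> (nat \<Rightarrow> nat) \<Rightarrow> nat \<Rightarrow> real" where
  "partial_comp lam c n = foldr (\<lambda>k. ifs lam (c k)) [0..<n] 0"

definition codings :: "real \<Rightarrow> real \<Rightarrow> (nat \<Rightarrow> nat) set" where
  "codings lam x = {c. (\<forall>n. c n \<in> {1,2,3,4}) \<and> (partial_comp lam c \<longlonglongrightarrow> x)}"

definition is_attractor :: "real \<Rightarrow> real set \<Rightarrow> bool" where
  "is_attractor lam K \<longleftrightarrow> compact K \<and> K \<noteq> {} \<and> K = (\<Union>i\<in>{1,2,3,4}. ifs lam i ` K)"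

definition U_aleph0 :: "real \<Rightarrow> real set \<Rightarrow> real set" where
  "U_aleph0 lam K = {x \<in> K. infinite (codings lam x) \<and> countable (codings lam x)}"

end

theory Submission
  imports Defs "HOL-Library.Equipollence"
begin

text \<open>Write a coding as the series \<open>\<Sum> \<lambda>\<^sup>k d\<^sub>i\<^sub>k\<close> with digit values
  \<open>0, 2\<lambda>, 3\<lambda> - \<lambda>\<^sup>2, 1 - \<lambda>\<close>. For \<open>\<lambda>\<close> this small the first-level images
  \<open>f\<^sub>i([0,1])\<close> are disjoint except for \<open>f\<^sub>2([0,1]) \<inter> f\<^sub>3([0,1])\<close>, and a point of that
  overlap forces the continuations \<open>24\<dots>\<close> and \<open>31\<dots>\<close>, reflecting the identity
  \<open>f\<^sub>2 \<circ> f\<^sub>4 = f\<^sub>3 \<circ> f\<^sub>1\<close>. Hence two codings of the same point differ only by swapping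
  some of the non-overlapping blocks \<open>24\<close>/\<open>31\<close> of one of them, and every such swap is
  again a coding. The codings of \<open>x\<close> are thus in bijection with the subsets of the set of
  block positions, which is either finite or uncountable.\<close>

definition digit :: "real \<Rightarrow> nat \<Rightarrow> real" where
  "digit lam i = ifs lam i 0"

lemma ifs_eq_digit: "ifs lam i x = lam * x + digit lam i"
  by (simp add: digit_def ifs_def)

lemma digit_simps [simp]:
  "digit lam 1 = 0" "digit lam (Suc 0) = 0" "digit lam 2 = 2 * lam" "digit lam 3 = 3 * lam - lam\<^sup>2"
  "digit lam 4 = 1 - lam"
  by (simp_all add: digit_def ifs_def)

lemma foldr_ifs_eq_sum:
  "foldr (\<lambda>k. ifs lam (c k)) [0..<n] y = (\<Sum>k<n. lam ^ k * digit lam (c k)) + lam ^ n * y"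
  by (induction n arbitrary: y) (simp_all add: ifs_eq_digit algebra_simps)

lemma partial_comp_eq_sum: "partial_comp lam c n = (\<Sum>k<n. lam ^ k * digit lam (c k))"
  using foldr_ifs_eq_sum[of lam c n 0] by (simp add: partial_comp_def)

lemma codings_iff_sums:
  "c \<in> codings lam x \<longleftrightarrow> range c \<subseteq> {1,2,3,4} \<and> (\<lambda>k. lam ^ k * digit lam (c k)) sums x"
  by (auto simp: codings_def sums_def partial_comp_eq_sum[abs_def])

definition flip_digit :: "nat \<Rightarrow> nat" where
  "flip_digit d = (if d = 2 then 3 else if d = 3 then 2 else if d = 4 then 1 else 4)"

definition swappable :: "(nat \<Rightarrow> nat) \<Rightarrow> nat set" where
  "swappable c = {n. (c n = 2 \<and> c (Suc n) = 4) \<or> (c n = 3 \<and> c (Suc n) = 1)}"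

text \<open>Exchanges the blocks \<open>24\<close> and \<open>31\<close> starting at the positions in \<open>T\<close>.\<close>

definition swap_at :: "(nat \<Rightarrow> nat) \<Rightarrow> nat set \<Rightarrow> nat \<Rightarrow> nat" where
  "swap_at c T k = (if k \<in> T \<union> Suc ` T then flip_digit (c k) else c k)"

lemma flip_digit_neq: "flip_digit d \<noteq> d" "d \<noteq> flip_digit d"
  by (auto simp: flip_digit_def)

lemma flip_digit_mem: "flip_digit d \<in> {1,2,3,4}"
  by (simp add: flip_digit_def)

lemma range_swap_at: "range c \<subseteq> {1,2,3,4} \<Longrightarrow> range (swap_at c T) \<subseteq> {1,2,3,4}"
  by (auto simp: swap_at_def flip_digit_def)

lemma Suc_notin_swappable: "n \<in> swappable c \<Longrightarrow> Suc n \<notin> swappable c"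
  by (auto simp: swappable_def)

lemma digit_flip_swappable:
  assumes "n \<in> swappable c"
  shows "digit lam (flip_digit (c n)) + lam * digit lam (flip_digit (c (Suc n)))
    = digit lam (c n) + lam * digit lam (c (Suc n))"
  using assms by (auto simp: swappable_def flip_digit_def algebra_simps power2_eq_square)

lemma inj_on_swap_at: "inj_on (swap_at c) (Pow (swappable c))"
proof (rule inj_onI)
  have swapped_iff: "swap_at c T n \<noteq> c n \<longleftrightarrow> n \<in> T \<union> Suc ` T" for T n
    by (simp add: swap_at_def flip_digit_neq)
  have recover: "T = swappable c \<inter> {n. swap_at c T n \<noteq> c n}" if "T \<subseteq> swappable c" for T
    using that Suc_notin_swappable by (auto simp: swapped_iff)
  fix T T' assume "T \<in> Pow (swappable c)" "T' \<in> Pow (swappable c)" "swap_at c T = swap_at c T'"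
  then show "T = T'"
    using recover[of T] recover[of T'] by simp
qed

lemma uncountable_Pow_infinite:
  assumes "infinite A" shows "uncountable (Pow A)"
proof
  assume "countable (Pow A)"
  then have "Pow A \<lesssim> (UNIV :: nat set)"
    by (simp add: countable_def lepoll_def)
  also have "(UNIV :: nat set) \<lesssim> A"
    using assms by (simp add: infinite_le_lepoll)
  finally show False
    using lesspoll_Pow_self[of A] by (meson lepoll_antisym lesspoll_def eqpoll_sym)
qed

lemma nine_halves_less_sqrt_21: "9/2 < sqrt (21::real)"
  by (rule real_less_rsqrt) (simp add: power2_eq_square)

locale small_ratio =
  fixes lam :: real
  assumes lam_pos: "0 < lam" and lam_less: "lam < (5 - sqrt 21) / 2"
begin

lemma lam_less_quarter: "lam < 1/4"
  using lam_less nine_halves_less_sqrt_21 by simp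

lemma gap_pos: "0 < 1 - 5 * lam + lam\<^sup>2"
proof -
  have "0 < ((5 - sqrt 21) / 2 - lam) * ((5 + sqrt 21) / 2 - lam)"
    using lam_less nine_halves_less_sqrt_21 by (intro mult_pos_pos) auto
  also have "\<dots> = 1 - 5 * lam + lam\<^sup>2"
    by (simp add: field_simps power2_eq_square)
  finally show ?thesis .
qed

lemma lam_sq_less: "lam\<^sup>2 < lam"
  using lam_pos lam_less_quarter by (simp add: power2_eq_square)

lemma digit_bounds:
  assumes "i \<in> {1,2,3,4}" shows "0 \<le> digit lam i" "digit lam i \<le> 1 - lam"
  using assms lam_pos lam_less_quarter lam_sq_less gap_pos by auto

definition tail :: "(nat \<Rightarrow> nat) \<Rightarrow> nat \<Rightarrow> real" where
  "tail c n = (\<Sum>k. lam ^ k * digit lam (c (n + k)))"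

lemma tail_summable:
  assumes "range c \<subseteq> {1,2,3,4}"
  shows "summable (\<lambda>k. lam ^ k * digit lam (c (n + k)))"
proof (rule summable_comparison_test)
  show "summable (\<lambda>k. lam ^ k)"
    using lam_pos lam_less_quarter by (intro summable_geometric) simp
  have "\<bar>digit lam (c (n + k))\<bar> \<le> 1" for k
    using digit_bounds[OF range_subsetD[OF assms], of "n + k"] lam_pos by (simp add: abs_le_iff)
  then show "\<exists>N. \<forall>k\<ge>N. norm (lam ^ k * digit lam (c (n + k))) \<le> lam ^ k"
    using lam_pos by (auto simp: abs_mult intro!: mult_left_le)
qed

lemma tail_bounds:
  assumes "range c \<subseteq> {1,2,3,4}"
  shows "0 \<le> tail c n" "tail c n \<le> 1"
proof -
  note summable = tail_summable[OF assms, of n]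
  have digit: "0 \<le> digit lam (c (n + k))" "digit lam (c (n + k)) \<le> 1 - lam" for k
    using digit_bounds[OF range_subsetD[OF assms]] by auto
  show "0 \<le> tail c n"
    unfolding tail_def using summable digit lam_pos by (intro suminf_nonneg) auto
  have "tail c n \<le> (\<Sum>k. (1 - lam) * lam ^ k)"
    unfolding tail_def using summable digit lam_pos lam_less_quarter
    by (intro suminf_le summable_mult summable_geometric)
       (auto simp: mult.commute[of "lam ^ _"] intro: mult_right_mono)
  also have "\<dots> = 1"
    using lam_pos lam_less_quarter by (simp add: suminf_mult suminf_geometric)
  finally show "tail c n \<le> 1" .
qed

lemma tail_Suc:
  assumes "range c \<subseteq> {1,2,3,4}"
  shows "tail c n = digit lam (c n) + lam * tail c (Suc n)"
  using suminf_split_head[OF tail_summable[OF assms, of n]]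
    suminf_mult[OF tail_summable[OF assms, of "Suc n"], of lam]
  by (simp add: tail_def mult.assoc)

lemma tail_0: "c \<in> codings lam x \<Longrightarrow> tail c 0 = x"
  by (simp add: codings_iff_sums tail_def sums_unique[symmetric])

text \<open>The intervals \<open>digit i + [0,\<lambda>]\<close> are \<open>[0,\<lambda>]\<close>, \<open>[2\<lambda>,3\<lambda>]\<close>, \<open>[3\<lambda>-\<lambda>\<^sup>2,4\<lambda>-\<lambda>\<^sup>2]\<close>
  and \<open>[1-\<lambda>,1]\<close>; the last gap is positive exactly because \<open>1 - 5\<lambda> + \<lambda>\<^sup>2 > 0\<close>.\<close>

lemma digit_overlap_scaled:
  assumes "a \<in> {1,2,3,4}" "b \<in> {1,2,3,4}" "0 \<le> U" "U \<le> lam" "0 \<le> V" "V \<le> lam"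
    and "digit lam a + U = digit lam b + V"
  shows "(a = b \<and> U = V) \<or> (a = 2 \<and> b = 3 \<and> U = lam - lam\<^sup>2 + V)
    \<or> (a = 3 \<and> b = 2 \<and> V = lam - lam\<^sup>2 + U)"
  using assms lam_pos lam_sq_less gap_pos lam_less_quarter by auto

lemma digit_overlap:
  assumes "a \<in> {1,2,3,4}" "b \<in> {1,2,3,4}" "0 \<le> u" "u \<le> 1" "0 \<le> v" "v \<le> 1"
    and "digit lam a + lam * u = digit lam b + lam * v"
  shows "(a = b \<and> u = v) \<or> (a = 2 \<and> b = 3 \<and> u = 1 - lam + v) \<or> (a = 3 \<and> b = 2 \<and> v = 1 - lam + u)"
proof -
  have "0 \<le> lam * u" "lam * u \<le> lam" "0 \<le> lam * v" "lam * v \<le> lam"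
    using assms lam_pos by (auto intro: mult_left_le)
  moreover have "lam - lam\<^sup>2 + lam * w = lam * (1 - lam + w)" for w
    by (simp add: algebra_simps power2_eq_square)
  ultimately show ?thesis
    using digit_overlap_scaled[OF assms(1,2) _ _ _ _ assms(7)] lam_pos by auto
qed

lemma digit_forced_4:
  assumes "p \<in> {1,2,3,4}" "0 \<le> w" "w \<le> 1" "1 - lam \<le> digit lam p + lam * w"
  shows "p = 4"
proof -
  have "lam * w \<le> lam"
    using assms lam_pos by (auto intro: mult_left_le)
  then show ?thesis
    using assms(1,4) gap_pos lam_less_quarter by auto
qed

lemma digit_forced_1:
  assumes "p \<in> {1,2,3,4}" "0 \<le> w" "digit lam p + lam * w \<le> lam"
  shows "p = 1"
proof -
  have "0 \<le> lam * w"
    using assms lam_pos by simp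
  then show ?thesis
    using assms(1,3) lam_pos lam_sq_less lam_less_quarter by auto
qed

lemma tail_eq_shifted:
  assumes c: "range c \<subseteq> {1,2,3,4}" and c': "range c' \<subseteq> {1,2,3,4}"
    and eq: "tail c n = 1 - lam + tail c' n"
  shows "c n = 4 \<and> c' n = 1 \<and> tail c (Suc n) = tail c' (Suc n)"
proof -
  note bounds = tail_bounds[OF c] tail_bounds[OF c']
  note rec = tail_Suc[OF c, of n] tail_Suc[OF c', of n]
  have "1 - lam \<le> digit lam (c n) + lam * tail c (Suc n)"
    using rec(1) eq bounds(3)[of n] by linarith
  then have 4: "c n = 4"
    by (rule digit_forced_4[OF range_subsetD[OF c] bounds(1,2)])
  have "digit lam (c' n) + lam * tail c' (Suc n) \<le> lam"
    using rec(2) eq bounds(2)[of n] by linarith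
  then have 1: "c' n = 1"
    by (rule digit_forced_1[OF range_subsetD[OF c'] bounds(3)])
  have "tail c (Suc n) = tail c' (Suc n)"
    using rec eq lam_pos by (auto simp: 4 1)
  with 4 1 show ?thesis by simp
qed

lemma tail_eq_step:
  assumes c: "range c \<subseteq> {1,2,3,4}" and c': "range c' \<subseteq> {1,2,3,4}"
    and eq: "tail c n = tail c' n"
  shows "(c' n = c n \<and> tail c (Suc n) = tail c' (Suc n)) \<or>
    (n \<in> swappable c \<and> c' n = flip_digit (c n) \<and> c' (Suc n) = flip_digit (c (Suc n)) \<and>
     tail c (Suc (Suc n)) = tail c' (Suc (Suc n)))"
proof -
  note bounds = tail_bounds[OF c] tail_bounds[OF c']
  have "digit lam (c n) + lam * tail c (Suc n) = digit lam (c' n) + lam * tail c' (Suc n)"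
    using eq tail_Suc[OF c, of n] tail_Suc[OF c', of n] by simp
  from digit_overlap[OF range_subsetD[OF c] range_subsetD[OF c'] bounds this]
  consider "c n = c' n" "tail c (Suc n) = tail c' (Suc n)"
    | "c n = 2" "c' n = 3" "tail c (Suc n) = 1 - lam + tail c' (Suc n)"
    | "c n = 3" "c' n = 2" "tail c' (Suc n) = 1 - lam + tail c (Suc n)"
    by blast
  then show ?thesis
  proof cases
    case 2
    with tail_eq_shifted[OF c c'] show ?thesis
      by (simp add: swappable_def flip_digit_def)
  next
    case 3
    with tail_eq_shifted[OF c' c] show ?thesis
      by (simp add: swappable_def flip_digit_def)
  qed simp
qed

lemma coding_eq_swap_at:
  assumes c: "c \<in> codings lam x" and c': "c' \<in> codings lam x"
  shows "c' = swap_at c {n \<in> swappable c. c' n \<noteq> c n}" (is "_ = swap_at c ?T")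
proof
  have rc: "range c \<subseteq> {1,2,3,4}" and rc': "range c' \<subseteq> {1,2,3,4}"
    using c c' by (simp_all add: codings_iff_sums)
  define synced where "synced n \<longleftrightarrow> tail c n = tail c' n" for n
  note step = tail_eq_step[OF rc rc', folded synced_def]
  have synced_or_inside: "synced n \<or> (\<exists>m. n = Suc m \<and> m \<in> ?T \<and> synced (Suc n))" for n
  proof (induction n)
    case 0
    then show ?case using tail_0[OF c] tail_0[OF c'] by (simp add: synced_def)
  next
    case (Suc n)
    then show ?case
      using step[of n] flip_digit_neq by auto
  qed
  have synced_T: "synced m" if "m \<in> ?T" for m
    using synced_or_inside[of m] that Suc_notin_swappable by auto
  fix n
  consider "n \<in> ?T" | m where "m \<in> ?T" "n = Suc m" | "n \<notin> ?T \<union> Suc ` ?T"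
    by blast
  then show "c' n = swap_at c ?T n"
  proof cases
    case 1
    then show ?thesis using step[OF synced_T[OF 1]] by (auto simp: swap_at_def)
  next
    case 2
    then have "n \<notin> ?T" using Suc_notin_swappable by auto
    with 2 show ?thesis using step[OF synced_T[OF 2(1)]] by (auto simp: swap_at_def)
  next
    case 3
    then show ?thesis
      using synced_or_inside[of n] step[of n] flip_digit_neq by (auto simp: swap_at_def)
  qed
qed

lemma swap_at_in_codings:
  assumes c: "c \<in> codings lam x" and T: "T \<subseteq> swappable c"
  shows "swap_at c T \<in> codings lam x"
proof -
  have rc: "range c \<subseteq> {1,2,3,4}" and sums: "(\<lambda>k. lam ^ k * digit lam (c k)) sums x"
    using c by (simp_all add: codings_iff_sums)
  txt \<open>Swapping the block at \<open>j\<close> changes the \<open>j\<close>-th term by \<open>g j\<close> and the next one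
    by \<open>-g j\<close>, so the two series differ by a telescoping series.\<close>
  define g where
    "g k = (if k \<in> T then lam ^ k * (digit lam (flip_digit (c k)) - digit lam (c k)) else 0)" for k
  define G where "G k = (case k of 0 \<Rightarrow> 0 | Suc j \<Rightarrow> g j)" for k
  have Suc_notin_T: "Suc k \<notin> T" if "k \<in> T" for k
    using that T Suc_notin_swappable by blast
  have telescoping: "lam ^ k * digit lam (swap_at c T k) = lam ^ k * digit lam (c k) + (G (Suc k) - G k)"
    for k
  proof -
    consider "k \<in> T" | j where "j \<in> T" "k = Suc j" | "k \<notin> T \<union> Suc ` T"
      by blast
    then show ?thesis
    proof cases
      case 1
      then have "G k = 0"
        using Suc_notin_T by (cases k) (auto simp: G_def g_def)
      with 1 show ?thesis
        by (simp add: G_def g_def swap_at_def algebra_simps)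
    next
      case 2
      have "digit lam (flip_digit (c j)) + lam * digit lam (flip_digit (c (Suc j)))
          = digit lam (c j) + lam * digit lam (c (Suc j))"
        using 2 T by (intro digit_flip_swappable) auto
      then have "lam ^ j * (digit lam (flip_digit (c j)) + lam * digit lam (flip_digit (c (Suc j))))
          = lam ^ j * (digit lam (c j) + lam * digit lam (c (Suc j)))"
        by simp
      then have "lam ^ Suc j * digit lam (flip_digit (c (Suc j)))
          = lam ^ Suc j * digit lam (c (Suc j)) - lam ^ j * (digit lam (flip_digit (c j)) - digit lam (c j))"
        by (simp add: algebra_simps)
      with 2 Suc_notin_T show ?thesis
        by (simp add: G_def g_def swap_at_def)
    next
      case 3
      then have "G k = 0" "G (Suc k) = 0"
        by (cases k; auto simp: G_def g_def)+
      with 3 show ?thesis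
        by (simp add: swap_at_def)
    qed
  qed
  have "g \<longlonglongrightarrow> 0"
  proof (rule tendsto_0_le[where K = 1])
    show "(\<lambda>k. lam ^ k) \<longlonglongrightarrow> 0"
      using lam_pos lam_less_quarter by (intro LIMSEQ_power_zero) simp
    have "\<bar>digit lam (flip_digit (c k)) - digit lam (c k)\<bar> \<le> 1" for k
      using digit_bounds[OF flip_digit_mem, of "c k"] digit_bounds[OF range_subsetD[OF rc, of k]] lam_pos
      by (simp add: abs_le_iff)
    then show "\<forall>\<^sub>F k in sequentially. norm (g k) \<le> norm (lam ^ k) * 1"
      using lam_pos by (auto simp: g_def abs_mult intro!: always_eventually mult_left_le)
  qed
  then have "(\<lambda>k. G (Suc k)) \<longlonglongrightarrow> 0"
    by (simp add: G_def)
  then have "G \<longlonglongrightarrow> 0"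
    by (rule LIMSEQ_imp_Suc)
  then have "(\<lambda>k. G (Suc k) - G k) sums 0"
    using telescope_sums by (fastforce simp: G_def)
  from sums_add[OF sums this] have "(\<lambda>k. lam ^ k * digit lam (swap_at c T k)) sums x"
    by (simp add: telescoping)
  with range_swap_at[OF rc] show ?thesis
    by (simp add: codings_iff_sums)
qed

lemma codings_eq_image_swap_at:
  assumes c: "c \<in> codings lam x"
  shows "codings lam x = swap_at c ` Pow (swappable c)"
proof
  show "codings lam x \<subseteq> swap_at c ` Pow (swappable c)"
    using coding_eq_swap_at[OF c] by blast
  show "swap_at c ` Pow (swappable c) \<subseteq> codings lam x"
    using swap_at_in_codings[OF c] by blast
qed

theorem uncountable_codings_if_infinite:
  assumes inf: "infinite (codings lam x)"
  shows "uncountable (codings lam x)"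
proof -
  obtain c where c: "c \<in> codings lam x"
    using inf by (metis ex_in_conv finite.emptyI)
  note codings_eq = codings_eq_image_swap_at[OF c]
  have "infinite (swappable c)"
    using inf by (auto simp: codings_eq)
  then have "uncountable (Pow (swappable c))"
    by (rule uncountable_Pow_infinite)
  then show ?thesis
    unfolding codings_eq using countable_image_inj_on inj_on_swap_at by blast
qed

end

theorem lemma2p32:
  fixes lam :: real and K :: "real set"
  assumes "0 < lam" and "lam < (5 - sqrt 21) / 2"
    and "is_attractor lam K"
  shows "(\<forall>x\<in>K. infinite (codings lam x) \<longrightarrow> uncountable (codings lam x))
         \<and> U_aleph0 lam K = {}"
proof -
  interpret small_ratio lam
    using assms(1,2) by unfold_locales
  show ?thesis
    using uncountable_codings_if_infinite by (auto simp: U_aleph0_def)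
qed

end
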